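(* For $I,J\in\mathcal I$ with $I\vartriangleleft J$, the unique $\vartriangleleft$-minimal set in $\mathcal M(I)$ and the unique $\vartriangleleft$-minimal set in $\mathcal M(J)$ are identical.
   Context: Let $(a_i)_{i=1,\dots,n}$ be a sequence of distinct integers between $1$ and $n$, and set $a_0=0$; write $A=(a_i)_{i=0,1,\dots,n}$. A set $I\subseteq\{0\}\cup[n]$ is feasible if $a_i<a_j$ for all $i,j\in I$ with $i<j$; $\mathcal I$ denotes the family of feasible sets of maximum cardinality. Patience sorting: start with empty piles $P_0,\dots,P_n$; for $i=0,1,\dots,n$ in order, put $a_i$ on top of the pile $P_j$ with smallest index $j$ such that $P_j$ is empty or the top element of $P_j$ is greater than $a_i$. Let $P_0,\dots,P_k$ be the resulting nonempty piles. Say $a_u$ is placed below $a_v$ on a pile if both lie on the same pile and $a_u$ was put there before $a_v$. For $I,J\in\mathcal I$, write $I\vartriangleleft J$ if $I\setminus J=\{u\}$ and $J\setminus I=\{v\}$ for some $u,v$ such that $a_u$ is placed strictly below $a_v$ on pile $P_i$ for some $1\le i\le k$. For $I\in\mathcal I$, $\mathcal M(I)\subseteq\mathcal I$ is the smallest family containing $I$ such that whenever $J\in\mathcal M(I)$ and $J'\vartriangleleft J$ then $J'\in\mathcal M(I)$. A set $I\in\mathcal I$ is $\vartriangleleft$-minimal if there is no $J\in\mathcal I$ with $J\vartriangleleft I$. (Each $\mathcal M(I)$ contains exactly one $\vartriangleleft$-minimal set.) *)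

theory Defs
  imports Main
begin

text \<open>The sequence is a function a :: nat => nat; only a 0, ..., a n matter,
  and the theorem assumes a 0 = 0 and that a 1..a n are distinct values in 1..n.\<close>

definition feasible :: "(nat \<Rightarrow> nat) \<Rightarrow> nat \<Rightarrow> nat set \<Rightarrow> bool" where
  "feasible a n I \<longleftrightarrow> I \<subseteq> {0..n} \<and> (\<forall>i\<in>I. \<forall>j\<in>I. i < j \<longrightarrow> a i < a j)"

definition maxfeas :: "(nat \<Rightarrow> nat) \<Rightarrow> nat \<Rightarrow> nat set set" where
  "maxfeas a n = {I. feasible a n I \<and> (\<forall>J. feasible a n J \<longrightarrow> card J \<le> card I)}"

text \<open>A pile is a list of indices, listed from bottom to top
  (i.e. in the order they were put on the pile). Putting a_i on the pile with
  the smallest index that is empty or whose top element exceeds a_i; empty piles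
  are represented implicitly by the end of the list.\<close>
fun ps_insert :: "(nat \<Rightarrow> nat) \<Rightarrow> nat \<Rightarrow> nat list list \<Rightarrow> nat list list" where
  "ps_insert a i [] = [[i]]"
| "ps_insert a i (p # ps) =
     (if p = [] \<or> a (last p) > a i then (p @ [i]) # ps else p # ps_insert a i ps)"

definition piles :: "(nat \<Rightarrow> nat) \<Rightarrow> nat \<Rightarrow> nat list list" where
  "piles a n = foldl (\<lambda>ps i. ps_insert a i ps) [] [0..<Suc n]"

definition placed_below :: "(nat \<Rightarrow> nat) \<Rightarrow> nat \<Rightarrow> nat \<Rightarrow> nat \<Rightarrow> nat \<Rightarrow> bool" where
  "placed_below a n i u v \<longleftrightarrow> i < length (piles a n) \<and>
     (\<exists>p q. p < q \<and> q < length (piles a n ! i) \<and> piles a n ! i ! p = u \<and> piles a n ! i ! q = v)"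

definition lhd :: "(nat \<Rightarrow> nat) \<Rightarrow> nat \<Rightarrow> nat set \<Rightarrow> nat set \<Rightarrow> bool" where
  "lhd a n I J \<longleftrightarrow> I \<in> maxfeas a n \<and> J \<in> maxfeas a n \<and>
     (\<exists>u v. I - J = {u} \<and> J - I = {v} \<and>
        (\<exists>i. 1 \<le> i \<and> i < length (piles a n) \<and> placed_below a n i u v))"

inductive_set Mfam :: "(nat \<Rightarrow> nat) \<Rightarrow> nat \<Rightarrow> nat set \<Rightarrow> nat set set"
  for a n I where
  base: "I \<in> Mfam a n I"
| step: "J \<in> Mfam a n I \<Longrightarrow> lhd a n J' J \<Longrightarrow> J' \<in> Mfam a n I"

definition lhd_minimal :: "(nat \<Rightarrow> nat) \<Rightarrow> nat \<Rightarrow> nat set \<Rightarrow> bool" where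
  "lhd_minimal a n I \<longleftrightarrow> I \<in> maxfeas a n \<and> \<not> (\<exists>J \<in> maxfeas a n. lhd a n J I)"

end

(*
  Read K \<lhd> J as a rewriting step from J to K.  A step replaces an index v by a
  smaller index u, so it decreases the sum of the indices and rewriting terminates:
  every M(I) contains a \<lhd>-minimal set.  The rewriting is also strongly confluent.
  Let K1 \<lhd> J and K2 \<lhd> J replace v1 by u1 and v2 by u2.  If v1 = v2, then u1 and
  u2 both lie below v1 on the pile of v1, so K1 and K2 are \<lhd>-comparable.  If
  v1 < v2, then feasibility of J, K1 and K2 forces u1 < u2 and a u1 < a u2, so
  performing both exchanges yields a maximum feasible set W with W \<lhd> K1 and
  W \<lhd> K2.  Hence the normal form reached from any set is unique, and as the
  normal form of I is also reachable from J when I \<lhd> J, the two coincide.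
*)

theory Submission
  imports Defs "HOL-Library.Confluence"
begin

definition pile_invariant :: "(nat \<Rightarrow> nat) \<Rightarrow> nat \<Rightarrow> nat list list \<Rightarrow> bool" where
  "pile_invariant a m ps \<longleftrightarrow> set (concat ps) = {..<m} \<and> distinct (concat ps) \<and>
     (\<forall>p\<in>set ps. sorted_wrt (<) p \<and> sorted_wrt (\<lambda>x y. a y < a x) p)"

lemma set_concat_ps_insert: "set (concat (ps_insert a i ps)) = insert i (set (concat ps))"
  by (induction ps) auto

lemma distinct_concat_ps_insert:
  "distinct (concat ps) \<Longrightarrow> i \<notin> set (concat ps) \<Longrightarrow> distinct (concat (ps_insert a i ps))"
  using set_concat_ps_insert[of a i] by (induction ps) auto

lemma set_ps_insertD:
  "q \<in> set (ps_insert a i ps) \<Longrightarrow>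
     q \<in> set ps \<or> q = [i] \<or> (\<exists>p\<in>set ps. q = p @ [i] \<and> (p = [] \<or> a i < a (last p)))"
  by (induction ps) (auto split: if_splits)

lemma sorted_wrt_last: "sorted_wrt R xs \<Longrightarrow> x \<in> set xs \<Longrightarrow> x = last xs \<or> R x (last xs)"
  by (induction xs) auto

lemma pile_invariant_ps_insert:
  assumes "pile_invariant a i ps"
  shows "pile_invariant a (Suc i) (ps_insert a i ps)"
proof -
  have sorted_new: "sorted_wrt (<) q \<and> sorted_wrt (\<lambda>x y. a y < a x) q"
    if q: "q \<in> set (ps_insert a i ps)" for q
  proof -
    consider "q \<in> set ps" | "q = [i]" | p where "p \<in> set ps" "q = p @ [i]" "p = [] \<or> a i < a (last p)"
      using set_ps_insertD[OF q] by blast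
    then show ?thesis
    proof cases
      case (3 p)
      have "x < i \<and> a i < a x" if "x \<in> set p" for x
        using assms 3 that sorted_wrt_last[of "\<lambda>x y. a y < a x" p x]
        unfolding pile_invariant_def by fastforce
      then show ?thesis
        using assms 3 unfolding pile_invariant_def by (auto simp: sorted_wrt_append)
    qed (use assms in \<open>auto simp: pile_invariant_def\<close>)
  qed
  moreover have "i \<notin> set (concat ps)"
    using assms unfolding pile_invariant_def by simp
  ultimately show ?thesis
    using assms distinct_concat_ps_insert[of ps i a]
    unfolding pile_invariant_def set_concat_ps_insert by auto
qed

lemma pile_invariant_piles: "pile_invariant a (Suc n) (piles a n)"
proof -
  have "pile_invariant a m (foldl (\<lambda>ps i. ps_insert a i ps) [] [0..<m])" for m
    by (induction m) (simp_all add: pile_invariant_ps_insert, simp add: pile_invariant_def)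
  then show ?thesis
    unfolding piles_def .
qed

lemma placed_below_less:
  assumes "placed_below a n i u v"
  shows "u < v" "a v < a u"
proof -
  obtain p q where pq: "i < length (piles a n)" "p < q" "q < length (piles a n ! i)"
      "piles a n ! i ! p = u" "piles a n ! i ! q = v"
    using assms unfolding placed_below_def by blast
  then have "sorted_wrt (<) (piles a n ! i)" "sorted_wrt (\<lambda>x y. a y < a x) (piles a n ! i)"
    using pile_invariant_piles[of a n] unfolding pile_invariant_def by auto
  then show "u < v" "a v < a u"
    using pq by (auto simp: sorted_wrt_iff_nth_less)
qed

lemma placed_belowI:
  "i < length (piles a n) \<Longrightarrow> p < q \<Longrightarrow> q < length (piles a n ! i) \<Longrightarrow>
    placed_below a n i (piles a n ! i ! p) (piles a n ! i ! q)"
  unfolding placed_below_def by blast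

lemma placed_below_same_top:
  assumes uw: "placed_below a n i u w" and vw: "placed_below a n j v w" and "u \<noteq> v"
  shows "placed_below a n i u v \<or> placed_below a n i v u"
proof -
  let ?P = "piles a n ! i" and ?Q = "piles a n ! j"
  obtain p q where pq: "i < length (piles a n)" "p < q" "q < length ?P" "?P ! p = u" "?P ! q = w"
    using uw unfolding placed_below_def by blast
  obtain p' q' where pq': "j < length (piles a n)" "p' < q'" "q' < length ?Q" "?Q ! p' = v" "?Q ! q' = w"
    using vw unfolding placed_below_def by blast
  have distinct: "distinct (concat (piles a n))"
    using pile_invariant_piles[of a n] unfolding pile_invariant_def by blast
  have piles: "?P \<in> set (piles a n)" "?Q \<in> set (piles a n)"
    using pq(1) pq'(1) by simp_all
  have "w \<in> set ?P" "w \<in> set ?Q"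
    using nth_mem[OF pq(3)] nth_mem[OF pq'(3)] pq(5) pq'(5) by simp_all
  then have same_pile: "?Q = ?P"
    using distinct piles unfolding distinct_concat_iff by blast
  have "distinct ?P"
    using distinct piles(1) unfolding distinct_concat_iff by blast
  then have "q' = q"
    using nth_eq_iff_index_eq[of ?P q' q] pq(3,5) pq'(3,5) same_pile by simp
  then have p': "p' < length ?P" "?P ! p' = v"
    using pq'(2,4) pq(3) same_pile by simp_all
  then have "p \<noteq> p'"
    using pq(4) \<open>u \<noteq> v\<close> by auto
  then consider "p < p'" | "p' < p"
    by linarith
  then show ?thesis
  proof cases
    case 1
    from placed_belowI[OF pq(1) this p'(1)] show ?thesis
      unfolding pq(4) p'(2) ..
  next
    case 2
    from placed_belowI[OF pq(1) this less_trans[OF pq(2,3)]] show ?thesis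
      unfolding pq(4) p'(2) ..
  qed
qed

lemma feasible_iff: "feasible a n I \<longleftrightarrow> I \<subseteq> {0..n} \<and> strict_mono_on I a"
  unfolding feasible_def strict_mono_on_def by blast

lemma maxfeas_strict_mono_on: "K \<in> maxfeas a n \<Longrightarrow> strict_mono_on K a"
  unfolding maxfeas_def feasible_iff by blast

lemma maxfeas_subset: "K \<in> maxfeas a n \<Longrightarrow> K \<subseteq> {0..n}"
  unfolding maxfeas_def feasible_def by blast

lemma maxfeas_finite: "K \<in> maxfeas a n \<Longrightarrow> finite K"
  unfolding maxfeas_def feasible_def using finite_subset by blast

lemma maxfeasI:
  "W \<subseteq> {0..n} \<Longrightarrow> strict_mono_on W a \<Longrightarrow> K \<in> maxfeas a n \<Longrightarrow> card W = card K \<Longrightarrow> W \<in> maxfeas a n"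
  unfolding maxfeas_def feasible_iff by simp

lemma lhdE:
  assumes "lhd a n K J"
  obtains u v i where "K - J = {u}" "J - K = {v}" "K = insert u (J - {v})" "v \<in> J" "u \<notin> J"
    "1 \<le> i" "placed_below a n i u v" "K \<in> maxfeas a n" "J \<in> maxfeas a n"
proof -
  obtain u v i where uv: "K - J = {u}" "J - K = {v}"
    and rest: "1 \<le> i" "placed_below a n i u v" "K \<in> maxfeas a n" "J \<in> maxfeas a n"
    using assms unfolding lhd_def by blast
  have "K = insert u (J - {v})" "v \<in> J" "u \<notin> J"
    using uv by blast+
  then show thesis
    by (rule that[OF uv _ _ _ rest])
qed

lemma lhdI:
  assumes "K \<in> maxfeas a n" "J \<in> maxfeas a n" "K - J = {u}" "J - K = {v}" "1 \<le> i"
    and "placed_below a n i u v"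
  shows "lhd a n K J"
proof -
  have "i < length (piles a n)"
    using assms(6) unfolding placed_below_def by blast
  then show ?thesis
    unfolding lhd_def using assms by blast
qed

lemma lhd_maxfeas: "lhd a n K J \<Longrightarrow> K \<in> maxfeas a n"
  unfolding lhd_def by simp

lemma lhd_sum_less:
  assumes "lhd a n K J"
  shows "\<Sum>K < \<Sum>J"
proof -
  obtain u v i where K: "K = insert u (J - {v})" "v \<in> J" "u \<notin> J"
      "placed_below a n i u v" "J \<in> maxfeas a n"
    using assms by (elim lhdE)
  have "finite J"
    using maxfeas_finite[OF K(5)] .
  moreover have "u < v"
    using placed_below_less(1)[OF K(4)] .
  ultimately show ?thesis
    using K(1-3) by (simp add: sum.remove)
qed

lemma exchanges_ordered:
  fixes a :: "'a::linorder \<Rightarrow> 'b::order"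
  assumes J: "strict_mono_on J a"
    and K1: "strict_mono_on (insert u1 (J - {v1})) a" and K2: "strict_mono_on (insert u2 (J - {v2})) a"
    and "v1 \<in> J" "v2 \<in> J" "u2 \<notin> J" "u1 < v1" "a v2 < a u2" "v1 < v2"
  shows "u1 < u2 \<and> a u1 < a u2"
proof -
  have "v1 < u2"
  proof (rule ccontr)
    assume "\<not> v1 < u2"
    then have "u2 < v1"
      using assms(4,6) by (cases u2 v1 rule: linorder_cases) auto
    moreover have "v1 \<in> insert u2 (J - {v2})"
      using assms(4,9) by auto
    ultimately have "a u2 < a v1"
      using K2 by (auto intro: strict_mono_onD)
    moreover have "a v1 < a v2"
      using J assms(4,5,9) by (auto intro: strict_mono_onD)
    ultimately have "a u2 < a v2"
      by (rule less_trans)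
    with \<open>a v2 < a u2\<close> show False
      by simp
  qed
  moreover have "a u1 < a v2"
    using K1 assms(5,7,9) by (auto intro: strict_mono_onD)
  ultimately show ?thesis
    using less_trans[OF \<open>u1 < v1\<close>] less_trans[OF _ \<open>a v2 < a u2\<close>] by blast
qed

lemma lhd_peak_same_removed:
  assumes "lhd a n K1 J" and "lhd a n K2 J" and "J - K1 = J - K2"
  shows "K1 = K2 \<or> lhd a n K1 K2 \<or> lhd a n K2 K1"
proof -
  obtain u1 v1 i1 where K1: "J - K1 = {v1}" "K1 = insert u1 (J - {v1})" "u1 \<notin> J" "1 \<le> i1"
      "placed_below a n i1 u1 v1" "K1 \<in> maxfeas a n"
    using assms(1) by (elim lhdE)
  obtain u2 v2 i2 where K2: "J - K2 = {v2}" "K2 = insert u2 (J - {v2})" "u2 \<notin> J"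
      "placed_below a n i2 u2 v2" "K2 \<in> maxfeas a n"
    using assms(2) by (elim lhdE)
  have "v2 = v1"
    using assms(3) K1(1) K2(1) by simp
  show ?thesis
  proof (cases "u1 = u2")
    case True
    then show ?thesis
      using K1(2) K2(2) \<open>v2 = v1\<close> by simp
  next
    case False
    have diff: "K1 - K2 = {u1}" "K2 - K1 = {u2}"
      using K1(2,3) K2(2,3) \<open>v2 = v1\<close> False by auto
    from placed_below_same_top[OF K1(5) K2(4)[unfolded \<open>v2 = v1\<close>] False]
    show ?thesis
      using lhdI[OF K1(6) K2(5) diff K1(4)] lhdI[OF K2(5) K1(6) diff(2,1) K1(4)] by blast
  qed
qed

lemma lhd_peak_distinct_removed:
  assumes "lhd a n K1 J" and "lhd a n K2 J" and "J - K1 \<noteq> J - K2"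
  shows "\<exists>W. lhd a n W K1 \<and> lhd a n W K2"
proof -
  obtain u1 v1 i1 where K1: "J - K1 = {v1}" "K1 = insert u1 (J - {v1})" "v1 \<in> J" "u1 \<notin> J"
      "1 \<le> i1" "placed_below a n i1 u1 v1" "K1 \<in> maxfeas a n" "J \<in> maxfeas a n"
    using assms(1) by (elim lhdE)
  obtain u2 v2 i2 where K2: "J - K2 = {v2}" "K2 = insert u2 (J - {v2})" "v2 \<in> J" "u2 \<notin> J"
      "1 \<le> i2" "placed_below a n i2 u2 v2" "K2 \<in> maxfeas a n"
    using assms(2) by (elim lhdE)
  have mono_J: "strict_mono_on J a"
    and mono_K1: "strict_mono_on (insert u1 (J - {v1})) a"
    and mono_K2: "strict_mono_on (insert u2 (J - {v2})) a"
    using maxfeas_strict_mono_on K1(2,7,8) K2(2,7) by blast+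
  have "v1 \<noteq> v2"
    using assms(3) K1(1) K2(1) by simp
  have u1_u2: "u1 < u2 \<and> a u1 < a u2 \<or> u2 < u1 \<and> a u2 < a u1"
  proof (cases "v1 < v2")
    case True
    from exchanges_ordered[OF mono_J mono_K1 mono_K2 K1(3) K2(3,4)
        placed_below_less(1)[OF K1(6)] placed_below_less(2)[OF K2(6)] this]
    show ?thesis ..
  next
    case False
    then have "v2 < v1"
      using \<open>v1 \<noteq> v2\<close> by simp
    from exchanges_ordered[OF mono_J mono_K2 mono_K1 K2(3) K1(3,4)
        placed_below_less(1)[OF K2(6)] placed_below_less(2)[OF K1(6)] this]
    show ?thesis ..
  qed
  then have "u1 \<noteq> u2"
    by auto
  define W where "W = insert u1 (insert u2 (J - {v1, v2}))"
  have "W \<subseteq> K1 \<union> K2"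
    unfolding W_def K1(2) K2(2) by blast
  then have "W \<subseteq> {0..n}"
    using maxfeas_subset[OF K1(7)] maxfeas_subset[OF K2(7)] by blast
  moreover have "strict_mono_on W a"
  proof (rule strict_mono_onI)
    fix x y assume "x \<in> W" "y \<in> W" "x < y"
    then consider "x \<in> K1" "y \<in> K1" | "x \<in> K2" "y \<in> K2" | "x = u1" "y = u2" | "x = u2" "y = u1"
      unfolding W_def K1(2) K2(2) by blast
    then show "a x < a y"
      using \<open>x < y\<close> u1_u2 mono_K1 mono_K2 unfolding K1(2) K2(2)
      by cases (auto dest: strict_mono_onD)
  qed
  moreover have "card W = card K1"
  proof -
    have "finite J"
      using maxfeas_finite[OF K1(8)] .
    then have "card {v1, v2} \<le> card J"
      using K1(3) K2(3) by (intro card_mono) auto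
    with \<open>finite J\<close> show ?thesis
      using K1(2-4) K2(3,4) \<open>v1 \<noteq> v2\<close> \<open>u1 \<noteq> u2\<close> unfolding W_def
      by (simp add: card_Diff_subset card_insert_if)
  qed
  ultimately have W: "W \<in> maxfeas a n"
    by (rule maxfeasI[OF _ _ K1(7)])
  have "W - K1 = {u2}" "K1 - W = {v2}" "W - K2 = {u1}" "K2 - W = {v1}"
    unfolding W_def K1(2) K2(2) using K1(3,4) K2(3,4) \<open>v1 \<noteq> v2\<close> \<open>u1 \<noteq> u2\<close> by auto
  then have "lhd a n W K1" "lhd a n W K2"
    using lhdI[OF W K1(7) _ _ K2(5,6)] lhdI[OF W K2(7) _ _ K1(5,6)] by simp_all
  then show ?thesis
    by blast
qed

lemma strong_confluentp_lhd: "strong_confluentp (lhd a n)\<inverse>\<inverse>"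
proof
  fix J K1 K2
  assume "(lhd a n)\<inverse>\<inverse> J K1" "(lhd a n)\<inverse>\<inverse> J K2"
  then have K: "lhd a n K1 J" "lhd a n K2 J"
    by simp_all
  show "\<exists>W. ((lhd a n)\<inverse>\<inverse>)\<^sup>*\<^sup>* K1 W \<and> ((lhd a n)\<inverse>\<inverse>)\<^sup>=\<^sup>= K2 W"
  proof (cases "J - K1 = J - K2")
    case True
    then consider "K1 = K2" | "lhd a n K1 K2" | "lhd a n K2 K1"
      using lhd_peak_same_removed[OF K] by blast
    then show ?thesis
      by cases (blast intro: r_into_rtranclp)+
  next
    case False
    then obtain W where "lhd a n W K1" "lhd a n W K2"
      using lhd_peak_distinct_removed[OF K] by blast
    then show ?thesis
      by (blast intro: r_into_rtranclp)
  qed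
qed

lemma confluentp_normal_form_unique:
  assumes "confluentp r" "r\<^sup>*\<^sup>* x y" "r\<^sup>*\<^sup>* x z" "\<nexists>w. r y w" "\<nexists>w. r z w"
  shows "y = z"
proof -
  obtain u where "r\<^sup>*\<^sup>* y u" "r\<^sup>*\<^sup>* z u"
    using confluentpD[OF assms(1-3)] by blast
  then show ?thesis
    using assms(4,5) by (metis converse_rtranclpE)
qed

lemma Mfam_eq: "Mfam a n I = {K. (lhd a n)\<^sup>*\<^sup>* K I}"
proof (intro set_eqI iffI; simp)
  fix K
  assume "K \<in> Mfam a n I"
  then show "(lhd a n)\<^sup>*\<^sup>* K I"
    by induction (auto intro: converse_rtranclp_into_rtranclp)
next
  fix K
  assume "(lhd a n)\<^sup>*\<^sup>* K I"
  then show "K \<in> Mfam a n I"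
    by (induction rule: converse_rtranclp_induct) (auto intro: Mfam.intros)
qed

lemma lhd_minimal_iff: "lhd_minimal a n K \<longleftrightarrow> K \<in> maxfeas a n \<and> (\<nexists>J. lhd a n J K)"
  unfolding lhd_minimal_def lhd_def by blast

lemma ex_lhd_minimal_below:
  assumes "I \<in> maxfeas a n"
  shows "\<exists>K. (lhd a n)\<^sup>*\<^sup>* K I \<and> lhd_minimal a n K"
  using assms
proof (induction "\<Sum>I" arbitrary: I rule: less_induct)
  case less
  show ?case
  proof (cases "lhd_minimal a n I")
    case False
    then obtain J where "lhd a n J I"
      using less.prems lhd_minimal_iff by blast
    moreover from this obtain K where "(lhd a n)\<^sup>*\<^sup>* K J" "lhd_minimal a n K"
      using less.hyps[OF lhd_sum_less] lhd_maxfeas by blast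
    ultimately show ?thesis
      by (blast intro: rtranclp.rtrancl_into_rtrancl)
  qed blast
qed

lemma the_lhd_minimal_in_Mfam:
  assumes "(lhd a n)\<^sup>*\<^sup>* K I" "lhd_minimal a n K"
  shows "(THE K'. K' \<in> Mfam a n I \<and> lhd_minimal a n K') = K"
proof (rule the_equality)
  show "K \<in> Mfam a n I \<and> lhd_minimal a n K"
    using assms by (simp add: Mfam_eq)
next
  fix K'
  assume "K' \<in> Mfam a n I \<and> lhd_minimal a n K'"
  then have "((lhd a n)\<inverse>\<inverse>)\<^sup>*\<^sup>* I K'" "\<nexists>J. lhd a n J K'"
    by (simp_all add: Mfam_eq lhd_minimal_iff rtranclp_conversep)
  moreover have "((lhd a n)\<inverse>\<inverse>)\<^sup>*\<^sup>* I K" "\<nexists>J. lhd a n J K"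
    using assms by (simp_all add: lhd_minimal_iff rtranclp_conversep)
  ultimately show "K' = K"
    using confluentp_normal_form_unique[OF strong_confluentp_imp_confluentp[OF strong_confluentp_lhd]]
    by simp
qed

theorem corollary2:
  fixes a :: "nat \<Rightarrow> nat" and n :: nat and I J :: "nat set"
  assumes "inj_on a {1..n}" and "a ` {1..n} \<subseteq> {1..n}" and "a 0 = 0"
    and "I \<in> maxfeas a n" and "J \<in> maxfeas a n" and "lhd a n I J"
  shows "(THE K. K \<in> Mfam a n I \<and> lhd_minimal a n K) = (THE K. K \<in> Mfam a n J \<and> lhd_minimal a n K)"
  \<comment> \<open>The argument never uses that a permutes 1..n with a 0 = 0.\<close>
proof -
  obtain K where K: "(lhd a n)\<^sup>*\<^sup>* K I" "lhd_minimal a n K"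
    using ex_lhd_minimal_below[OF assms(4)] by blast
  have "(lhd a n)\<^sup>*\<^sup>* K J"
    using K(1) assms(6) by (rule rtranclp.rtrancl_into_rtrancl)
  then show ?thesis
    using the_lhd_minimal_in_Mfam K by simp
qed

end
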